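(* Let $p$ be a binary word of length $l$ all of whose runs have size at least $2$. Then $p$ has an internal zero at $n$ for every $n\ge l+1$.
   Context: $c_p(w)$ is the number of occurrences of $p$ as a (not necessarily consecutive) subsequence of $w$; $B_{n,p}(k)$ is the number of binary words of length $n$ with $c_p(w)=k$. A run is a maximal block of consecutive equal letters; its size is its length. $p$ has an internal zero at $n$ if there exist $0\le k_1<k_2<k_3$ with $B_{n,p}(k_1)\ne0$, $B_{n,p}(k_2)=0$, $B_{n,p}(k_3)\ne0$. *)

theory Defs
  imports Main
begin

definition occ :: "bool list \<Rightarrow> bool list \<Rightarrow> nat" where
  "occ p w = card {I. I \<subseteq> {..<length w} \<and> card I = length p \<and> nths w I = p}"

definition B :: "nat \<Rightarrow> bool list \<Rightarrow> nat \<Rightarrow> nat" where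
  "B n p k = card {w :: bool list. length w = n \<and> occ p w = k}"

definition is_run :: "bool list \<Rightarrow> nat \<Rightarrow> nat \<Rightarrow> bool" where
  "is_run p i j \<longleftrightarrow> i < j \<and> j \<le> length p \<and> (\<forall>m. i \<le> m \<and> m < j \<longrightarrow> p ! m = p ! i)
     \<and> (i = 0 \<or> p ! (i - 1) \<noteq> p ! i) \<and> (j = length p \<or> p ! j \<noteq> p ! i)"

definition internal_zero :: "bool list \<Rightarrow> nat \<Rightarrow> bool" where
  "internal_zero p n \<longleftrightarrow> (\<exists>k1 k2 k3. k1 < k2 \<and> k2 < k3 \<and>
     B n p k1 \<noteq> 0 \<and> B n p k2 = 0 \<and> B n p k3 \<noteq> 0)"

end

theory Submission
  imports Defs
begin

text \<open>If every letter of p has an equal neighbour, then c_p(w) never equals 2: given two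
different occurrences, take a position where they differ and an adjacent pair a, a+1 of equal
letters of p containing it. The pointwise minimum and maximum of the two occurrences are again
occurrences, and their four entries at a and a+1 take at least three distinct values carrying the
letter p!a; any two of these can be spliced in at a, a+1, giving three occurrences. Hence
B_{n,p}(2) = 0, while B_{n,p}(0) \<noteq> 0 (a constant word avoiding hd p) and some
B_{n,p}(k) \<noteq> 0 with k \<ge> 3 (the word hd p # p padded to length n, which has two
occurrences).\<close>

definition embeddings :: "bool list \<Rightarrow> bool list \<Rightarrow> nat list set" where
  "embeddings p w = {xs. sorted_wrt (<) xs \<and> set xs \<subseteq> {..<length w} \<and> map ((!) w) xs = p}"

lemma nths_eq_map_sorted_list_of_set:
  assumes "I \<subseteq> {..<length w}"
  shows "nths w I = map ((!) w) (sorted_list_of_set I)"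
proof -
  have "nths w I = map ((!) w) (nths [0..<length w] I)"
    by (metis map_nth nths_map)
  moreover have "nths [0..<length w] I = sorted_list_of_set I"
    using assms finite_subset[OF assms]
    by (intro sorted_distinct_set_unique) (force simp: sorted_nths set_nths)+
  ultimately show ?thesis by simp
qed

lemma finite_embeddings: "finite (embeddings p w)"
proof (rule finite_subset)
  show "embeddings p w \<subseteq> {xs. set xs \<subseteq> {..<length w} \<and> length xs = length p}"
    unfolding embeddings_def by auto
qed (rule finite_lists_length_eq, simp)

lemma occ_eq_card_embeddings: "occ p w = card (embeddings p w)"
proof -
  have "{I. I \<subseteq> {..<length w} \<and> card I = length p \<and> nths w I = p} = set ` embeddings p w"
  proof (intro equalityI subsetI)
    fix I assume "I \<in> {I. I \<subseteq> {..<length w} \<and> card I = length p \<and> nths w I = p}"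
    then have I: "I \<subseteq> {..<length w}" "nths w I = p" by auto
    then have "finite I" using finite_subset by blast
    then have "sorted_list_of_set I \<in> embeddings p w" "I = set (sorted_list_of_set I)"
      using I nths_eq_map_sorted_list_of_set[OF I(1)] by (auto simp: embeddings_def)
    then show "I \<in> set ` embeddings p w" by blast
  next
    fix I assume "I \<in> set ` embeddings p w"
    then obtain xs where xs: "I = set xs" "sorted_wrt (<) xs" "set xs \<subseteq> {..<length w}"
        "map ((!) w) xs = p"
      by (auto simp: embeddings_def)
    then have "distinct xs" "sorted_list_of_set I = xs"
      by (auto simp: strict_sorted_iff sorted_list_of_set.idem_if_sorted_distinct)
    then show "I \<in> {I. I \<subseteq> {..<length w} \<and> card I = length p \<and> nths w I = p}"
      using xs nths_eq_map_sorted_list_of_set[OF xs(3)] by (auto simp: distinct_card)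
  qed
  moreover have "inj_on set (embeddings p w)"
    by (rule inj_onI) (auto simp: embeddings_def strict_sorted_iff intro: sorted_distinct_set_unique)
  ultimately show ?thesis unfolding occ_def by (simp add: card_image)
qed

lemma in_embeddings_iff:
  "xs \<in> embeddings p w \<longleftrightarrow> length xs = length p
     \<and> (\<forall>i j. i < j \<longrightarrow> j < length p \<longrightarrow> xs ! i < xs ! j)
     \<and> (\<forall>i < length p. xs ! i < length w \<and> w ! (xs ! i) = p ! i)"
  unfolding embeddings_def
  by (auto simp: sorted_wrt_iff_nth_less in_set_conv_nth dest: subsetD[OF _ nth_mem]
      intro!: nth_equalityI)

lemma occ_eq_0_if_not_subset:
  assumes "\<not> set p \<subseteq> set w"
  shows "occ p w = 0"
proof -
  have "set p \<subseteq> set w" if "xs \<in> embeddings p w" for xs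
    using that nth_mem by (fastforce simp: embeddings_def)
  then have "embeddings p w = {}"
    using assms by blast
  then show ?thesis by (simp add: occ_eq_card_embeddings)
qed

text \<open>Choosing f = min or f = max combines two occurrences pointwise.\<close>
lemma map2_in_embeddings:
  assumes mono: "\<And>a b c d. a < b \<Longrightarrow> c < d \<Longrightarrow> f a c < f b d"
    and choice: "\<And>a c. f a c = a \<or> f a c = c"
    and "xs \<in> embeddings p w" "ys \<in> embeddings p w"
  shows "map2 f xs ys \<in> embeddings p w"
proof -
  have "f (xs ! i) (ys ! i) < length w \<and> w ! f (xs ! i) (ys ! i) = p ! i" if "i < length p" for i
    using choice[of "xs ! i" "ys ! i"] assms(3,4) that by (auto simp: in_embeddings_iff)
  then show ?thesis
    using assms(3,4) by (auto simp: in_embeddings_iff intro: mono)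
qed

lemma splice_in_embeddings:
  assumes lo: "lo \<in> embeddings p w" and hi: "hi \<in> embeddings p w"
    and a: "Suc a < length p"
    and uv: "lo ! a \<le> u" "u < v" "v \<le> hi ! Suc a" "v < length w"
    and letters: "w ! u = p ! a" "w ! v = p ! Suc a"
  shows "take a lo @ u # v # drop (Suc (Suc a)) hi \<in> embeddings p w"
    (is "?s \<in> _")
proof -
  have sorted: "sorted_wrt (<) lo" "sorted_wrt (<) hi"
    and map: "map ((!) w) lo = p" "map ((!) w) hi = p"
    and bounded: "set lo \<subseteq> {..<length w}" "set hi \<subseteq> {..<length w}"
    using lo hi by (auto simp: embeddings_def)
  have len: "length lo = length p" "length hi = length p"
    using map by (metis length_map)+
  have below: "x < u" if "x \<in> set (take a lo)" for x
  proof -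
    have "lo ! a \<in> set (drop a lo)"
      using a len by (metis Cons_nth_drop_Suc Suc_lessD list.set_intros(1))
    then have "x < lo ! a"
      using sorted(1) that by (metis append_take_drop_id sorted_wrt_append)
    with uv(1) show ?thesis by simp
  qed
  have above: "v < x" if "x \<in> set (drop (Suc (Suc a)) hi)" for x
  proof -
    have "hi ! Suc a \<in> set (take (Suc (Suc a)) hi)"
      using a len by (auto simp: in_set_conv_nth intro!: exI[of _ "Suc a"])
    then have "hi ! Suc a < x"
      using sorted(2) that by (metis append_take_drop_id sorted_wrt_append)
    with uv(3) show ?thesis by simp
  qed
  have "sorted_wrt (<) ?s"
    using sorted uv(2) by (fastforce simp: sorted_wrt_append dest: below above)
  moreover have "set ?s \<subseteq> {..<length w}"
    using bounded uv by (auto dest: in_set_takeD in_set_dropD)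
  moreover have "map ((!) w) ?s = p"
  proof -
    have "map ((!) w) ?s = take a p @ p ! a # p ! Suc a # drop (Suc (Suc a)) p"
      using map letters by (simp flip: take_map drop_map)
    also have "\<dots> = p"
      using a by (simp add: Cons_nth_drop_Suc)
    finally show ?thesis .
  qed
  ultimately show ?thesis
    unfolding embeddings_def by blast
qed

lemma three_splices:
  assumes lo: "lo \<in> embeddings p w" and hi: "hi \<in> embeddings p w"
    and a: "Suc a < length p" "p ! a = p ! Suc a"
    and xyz: "lo ! a \<le> x" "x < y" "y < z" "z \<le> hi ! Suc a" "z < length w"
    and letters: "w ! x = p ! a" "w ! y = p ! a" "w ! z = p ! a"
  shows "occ p w \<ge> 3"
proof -
  define s where "s u v = take a lo @ u # v # drop (Suc (Suc a)) hi" for u v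
  have s_at: "s u v ! a = u" "s u v ! Suc a = v" for u v
    using a lo hi by (auto simp: s_def in_embeddings_iff nth_append)
  have "s x y \<in> embeddings p w" "s x z \<in> embeddings p w" "s y z \<in> embeddings p w"
    unfolding s_def using xyz letters a
    by (auto intro!: splice_in_embeddings[OF lo hi])
  moreover have "card {s x y, s x z, s y z} = 3"
    using xyz s_at by (metis card_3_iff less_irrefl)
  ultimately show ?thesis
    by (metis occ_eq_card_embeddings card_mono finite_embeddings empty_subsetI insert_subset)
qed

definition paired_letters :: "bool list \<Rightarrow> bool" where
  "paired_letters p \<longleftrightarrow>
     (\<forall>t < length p. \<exists>a. Suc a < length p \<and> p ! a = p ! Suc a \<and> (t = a \<or> t = Suc a))"

lemma paired_letters_if_runs_ge_2:
  assumes "\<forall>i j. is_run p i j \<longrightarrow> j - i \<ge> 2"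
  shows "paired_letters p"
  unfolding paired_letters_def
proof (intro allI impI)
  fix t assume t: "t < length p"
  show "\<exists>a. Suc a < length p \<and> p ! a = p ! Suc a \<and> (t = a \<or> t = Suc a)"
  proof (rule ccontr)
    assume isolated: "\<not> ?thesis"
    have "is_run p t (Suc t)"
      unfolding is_run_def
    proof (intro conjI)
      show "t = 0 \<or> p ! (t - 1) \<noteq> p ! t"
        using isolated[unfolded not_ex, rule_format, of "t - 1"] t by (cases t) auto
      show "Suc t = length p \<or> p ! Suc t \<noteq> p ! t"
        using isolated[unfolded not_ex, rule_format, of t] t by auto
    qed (use t le_less_Suc_eq in auto)
    then show False using assms by fastforce
  qed
qed

lemma occ_ge_3_if_two_embeddings:
  assumes p: "paired_letters p"
    and xs: "xs \<in> embeddings p w" and ys: "ys \<in> embeddings p w" and "xs \<noteq> ys"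
  shows "occ p w \<ge> 3"
proof -
  define lo where "lo = map2 min xs ys"
  define hi where "hi = map2 max xs ys"
  have lo_emb: "lo \<in> embeddings p w" and hi_emb: "hi \<in> embeddings p w"
    unfolding lo_def hi_def by (auto intro!: map2_in_embeddings xs ys)
  have len: "length xs = length p" "length ys = length p"
    using xs ys by (auto simp: in_embeddings_iff)
  have lo_nth: "lo ! i = min (xs ! i) (ys ! i)" and hi_nth: "hi ! i = max (xs ! i) (ys ! i)"
    if "i < length p" for i
    using that len by (auto simp: lo_def hi_def)
  obtain t where t: "t < length p" "xs ! t \<noteq> ys ! t"
    using \<open>xs \<noteq> ys\<close> len nth_equalityI by metis
  then obtain a where a: "Suc a < length p" "p ! a = p ! Suc a" "t = a \<or> t = Suc a"
    using p unfolding paired_letters_def by blast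
  define \<alpha> \<beta> \<gamma> \<delta> where "\<alpha> = lo ! a" "\<beta> = lo ! Suc a" "\<gamma> = hi ! a" "\<delta> = hi ! Suc a"
  have order: "\<alpha> < \<beta>" "\<gamma> < \<delta>" "\<alpha> \<le> \<gamma>" "\<beta> \<le> \<delta>" "\<alpha> < \<gamma> \<or> \<beta> < \<delta>"
    using a t lo_emb hi_emb lo_nth hi_nth
    unfolding \<alpha>_\<beta>_\<gamma>_\<delta>_def in_embeddings_iff by (auto simp: min_def max_def)
  have letters: "w ! \<alpha> = p ! a" "w ! \<beta> = p ! a" "w ! \<gamma> = p ! a" "w ! \<delta> = p ! a"
    and bound: "\<delta> < length w"
    using a lo_emb hi_emb unfolding \<alpha>_\<beta>_\<gamma>_\<delta>_def in_embeddings_iff by auto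
  note three = three_splices[OF lo_emb hi_emb a(1,2), folded \<alpha>_\<beta>_\<gamma>_\<delta>_def]
  show ?thesis
  proof (cases "\<alpha> < \<gamma>")
    case True
    then show ?thesis using three[of \<alpha> \<gamma> \<delta>] order letters bound by simp
  next
    case False
    then show ?thesis using three[of \<alpha> \<beta> \<delta>] order letters bound by simp
  qed
qed

lemma occ_ne_2:
  assumes "paired_letters p"
  shows "occ p w \<noteq> 2"
proof
  assume "occ p w = 2"
  then obtain xs ys where "embeddings p w = {xs, ys}" "xs \<noteq> ys"
    by (metis occ_eq_card_embeddings card_2_iff)
  then have "occ p w \<ge> 3"
    using occ_ge_3_if_two_embeddings[OF assms, of xs w ys] by blast
  with \<open>occ p w = 2\<close> show False by simp
qed

lemma occ_Cons_hd_append_ge_3: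
  assumes "paired_letters p" "p \<noteq> []"
  shows "occ p (hd p # p @ v) \<ge> 3"
proof (rule occ_ge_3_if_two_embeddings[OF assms(1)])
  let ?w = "hd p # p @ v"
  have w_Suc: "?w ! Suc i = p ! i" if "i < length p" for i
    using that by (simp add: nth_append)
  have w_0: "?w ! 0 = p ! 0"
    using assms(2) by (simp add: hd_conv_nth)
  show "map Suc [0..<length p] \<in> embeddings p ?w"
    unfolding in_embeddings_iff using w_Suc by simp
  show "map (\<lambda>i. if i = 0 then 0 else Suc i) [0..<length p] \<in> embeddings p ?w"
    unfolding in_embeddings_iff using w_Suc w_0 by simp
  have "map Suc [0..<length p] ! 0 = 1" "map (\<lambda>i. if i = 0 then 0 else Suc i) [0..<length p] ! 0 = 0"
    using assms(2) by simp_all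
  then show "map Suc [0..<length p] \<noteq> map (\<lambda>i. if i = 0 then 0 else Suc i) [0..<length p]"
    by (metis zero_neq_one)
qed

lemma B_ne_0_if_length: "length w = n \<Longrightarrow> B n p (occ p w) \<noteq> 0"
proof -
  assume "length w = n"
  moreover have "finite {w :: bool list. length w = n \<and> occ p w = occ p w'}" for w'
    by (rule finite_subset[OF _ finite_lists_length_eq[of "UNIV :: bool set" n]]) auto
  ultimately show ?thesis
    unfolding B_def by (metis (mono_tags, lifting) card_0_eq empty_iff mem_Collect_eq)
qed

lemma B_eq_0_if_never: "(\<And>w. occ p w \<noteq> k) \<Longrightarrow> B n p k = 0"
  unfolding B_def by simp

theorem mainTheorem11:
  fixes p :: "bool list" and n :: nat
  assumes "p \<noteq> []"
    and "\<forall>i j. is_run p i j \<longrightarrow> j - i \<ge> 2"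
    and "n \<ge> length p + 1"
  shows "internal_zero p n"
proof -
  have paired: "paired_letters p"
    using assms(2) by (rule paired_letters_if_runs_ge_2)
  define w0 where "w0 = replicate n (\<not> hd p)"
  define w1 where "w1 = hd p # p @ replicate (n - length p - 1) True"
  have "hd p \<notin> set w0"
    by (simp add: w0_def)
  then have "occ p w0 = 0"
    using hd_in_set[OF assms(1)] by (intro occ_eq_0_if_not_subset) blast
  then have "B n p 0 \<noteq> 0"
    using B_ne_0_if_length[of w0 n p] by (simp add: w0_def)
  moreover have "B n p 2 = 0"
    using occ_ne_2[OF paired] by (rule B_eq_0_if_never)
  moreover have "occ p w1 \<ge> 3"
    unfolding w1_def using paired assms(1) by (rule occ_Cons_hd_append_ge_3)
  moreover have "B n p (occ p w1) \<noteq> 0"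
    using assms(3) by (intro B_ne_0_if_length) (simp add: w1_def)
  ultimately show ?thesis
    unfolding internal_zero_def
    by (intro exI[of _ 0] exI[of _ 2] exI[of _ "occ p w1"]) auto
qed

end
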